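(* Let $c\in(0,1)$ and let $\sigma>0$ satisfy $C_{\mathrm{BS}}(\sigma)=c$. Let $$U_{23}(c)=H\!\left(\min\left(\frac{1+c}{2},\; c+e^k\,\Phi(-\sqrt{2k})\right)\right)\quad\text{and}\quad L_{U23}(c)=d_1^{-1}\!\left(\Phi^{-1}\!\left(\frac{c}{C_{\mathcal D}(U_{23}(c))}\right)\right).$$ Then $L_{U23}(c)\le\sigma$.
   Context: Fix $k\ge 0$. Let $\Phi$ and $\phi$ denote the standard normal distribution function and density. For $\sigma>0$ put $d_1(\sigma)=-k/\sigma+\sigma/2$, $d_2(\sigma)=-k/\sigma-\sigma/2$, and $C_{\mathrm{BS}}(\sigma)=\Phi(d_1(\sigma))-e^k\,\Phi(d_2(\sigma))$, a strictly increasing bijection from $(0,\infty)$ onto $(0,1)$; for $c\in(0,1)$ the implied volatility is the unique $\sigma>0$ with $C_{\mathrm{BS}}(\sigma)=c$. For $c<\mathcal D<1$ define $H(\mathcal D)=\Phi^{-1}(\mathcal D)-\Phi^{-1}\!\left(\frac{\mathcal D-c}{e^k}\right)$. The price-to-delta ratio is $C_{\mathcal D}(y)=C_{\mathrm{BS}}(y)/\Phi(d_1(y))$. The function $d_1^{-1}(x)=x+\sqrt{x^2+2k}$ (which equals $2\max(x,0)$ when $k=0$) is the inverse of $d_1$. *)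

theory Defs
  imports "HOL-Probability.Probability"
begin

definition Phi :: "real \<Rightarrow> real" where
  "Phi x = (LBINT t:{..x}. std_normal_density t)"

definition Phi_inv :: "real \<Rightarrow> real" where
  "Phi_inv p = (THE x. Phi x = p)"

definition d1 :: "real \<Rightarrow> real \<Rightarrow> real" where
  "d1 k s = - k / s + s / 2"

definition d2 :: "real \<Rightarrow> real \<Rightarrow> real" where
  "d2 k s = - k / s - s / 2"

definition C_BS :: "real \<Rightarrow> real \<Rightarrow> real" where
  "C_BS k s = Phi (d1 k s) - exp k * Phi (d2 k s)"

definition H :: "real \<Rightarrow> real \<Rightarrow> real \<Rightarrow> real" where
  "H k c D = Phi_inv D - Phi_inv ((D - c) / exp k)"

definition C_D :: "real \<Rightarrow> real \<Rightarrow> real" where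
  "C_D k y = C_BS k y / Phi (d1 k y)"

definition d1_inv :: "real \<Rightarrow> real \<Rightarrow> real" where
  "d1_inv k x = x + sqrt (x\<^sup>2 + 2 * k)"

definition U23 :: "real \<Rightarrow> real \<Rightarrow> real" where
  "U23 k c = H k c (min ((1 + c) / 2) (c + exp k * Phi (- sqrt (2 * k))))"

definition L_U23 :: "real \<Rightarrow> real \<Rightarrow> real" where
  "L_U23 k c = d1_inv k (Phi_inv (c / C_D k (U23 k c)))"

end

theory Submission imports Defs "HOL-Real_Asymp.Real_Asymp" begin

text \<open>
  For every \<open>D\<close> in \<open>(c, 1)\<close> the implied volatility satisfies \<open>\<sigma> \<le> H(D)\<close>: the function
  \<open>x \<mapsto> \<Phi>(x) - e\<^sup>k \<Phi>(x - \<sigma>)\<close> attains its maximum \<open>C\<^sub>B\<^sub>S(\<sigma>) = c\<close> at \<open>x = d\<^sub>1(\<sigma>)\<close>, so at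
  \<open>x = \<Phi>\<^sup>-\<^sup>1(D)\<close> it gives \<open>\<Phi>(\<Phi>\<^sup>-\<^sup>1(D) - \<sigma>) \<ge> (D - c) / e\<^sup>k\<close>.
  The price-to-delta ratio \<open>C_D\<close> is nondecreasing in the volatility: its derivative has the
  sign of \<open>d\<^sub>1 \<Phi>(d\<^sub>1) - e\<^sup>k d\<^sub>2 \<Phi>(d\<^sub>2)\<close>, which is nonnegative because \<open>w \<Phi>(-w) / \<phi>(w)\<close> is
  nondecreasing, by the Mills-ratio bound \<open>w \<phi>(w) < (1 + w\<^sup>2) \<Phi>(-w)\<close>.
  Hence \<open>c / C_D(U23) \<le> c / C_D(\<sigma>) = \<Phi>(d\<^sub>1(\<sigma>))\<close>, and applying the increasing maps
  \<open>\<Phi>\<^sup>-\<^sup>1\<close> and \<open>d\<^sub>1\<^sup>-\<^sup>1\<close> gives \<open>L_U23 \<le> \<sigma>\<close>.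
\<close>

abbreviation phi :: "real \<Rightarrow> real" where "phi \<equiv> std_normal_density"

lemma set_integrable_std_normal_density: "A \<in> sets lborel \<Longrightarrow> set_integrable lborel A phi"
  by (rule set_integrable_subset[of _ UNIV]) (simp_all add: set_integrable_def)

lemma Phi_eq_Phi_plus_integral_Ioc:
  assumes "x \<le> y"
  shows "Phi y = Phi x + (LBINT t:{x<..y}. phi t)"
proof -
  have "{..y} = {..x} \<union> {x<..y}" using assms by auto
  then show ?thesis unfolding Phi_def
    by (simp only:) (rule set_integral_Un, auto intro: set_integrable_std_normal_density)
qed

lemma Phi_eq_Phi_plus_interval_integral: "Phi u = Phi a + (LBINT t=a..u. phi t)"
proof (cases "a \<le> u")
  case True
  then show ?thesis using Phi_eq_Phi_plus_integral_Ioc[OF True] by (simp add: interval_integral_Ioc)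
next
  case False
  then have "u \<le> a" by simp
  then show ?thesis
    using Phi_eq_Phi_plus_integral_Ioc[OF \<open>u \<le> a\<close>]
    by (simp add: interval_integral_endpoints_reverse[of a u] interval_integral_Ioc)
qed

lemma has_real_derivative_Phi: "(Phi has_real_derivative phi x) (at x)"
proof -
  have "continuous_on {x-1..x+1} phi"
    unfolding std_normal_density_def by (intro continuous_intros) auto
  then have "((\<lambda>u. LBINT t=x..u. phi t) has_vector_derivative phi x) (at x within {x-1..x+1})"
    by (intro interval_integral_FTC2) auto
  then have "((\<lambda>u. Phi x + (LBINT t=x..u. phi t)) has_real_derivative phi x) (at x)"
    by (auto intro!: derivative_eq_intros
        simp: at_within_Icc_at has_real_derivative_iff_has_vector_derivative)
  then show ?thesis by (simp flip: Phi_eq_Phi_plus_interval_integral)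
qed

lemma has_real_derivative_Phi_comp[derivative_intros]:
  "(f has_real_derivative f') (at x within s) \<Longrightarrow>
    ((\<lambda>x. Phi (f x)) has_real_derivative phi (f x) * f') (at x within s)"
  using DERIV_chain2[OF has_real_derivative_Phi] by blast

lemma isCont_Phi[continuous_intros]: "isCont Phi x"
  using has_real_derivative_Phi DERIV_isCont by blast

lemma Phi_strict_mono: "x < y \<Longrightarrow> Phi x < Phi y"
  by (rule DERIV_pos_imp_increasing)
    (use has_real_derivative_Phi normal_density_pos[of 1 0] in auto)

lemma Phi_mono: "x \<le> y \<Longrightarrow> Phi x \<le> Phi y"
  using Phi_strict_mono by (cases "x = y") (auto simp: less_le)

lemma Phi_inj: "Phi x = Phi y \<Longrightarrow> x = y"
  using Phi_strict_mono by (metis linorder_neqE_linordered_idom less_irrefl)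

lemma Phi_tendsto_1_at_top: "(Phi \<longlongrightarrow> 1) at_top"
proof (rule tendsto_at_topI_sequentially)
  fix X :: "nat \<Rightarrow> real" assume X: "filterlim X at_top sequentially"
  have "(\<lambda>n. integral\<^sup>L lborel (\<lambda>t. indicator {..X n} t *\<^sub>R phi t)) \<longlonglongrightarrow> integral\<^sup>L lborel phi"
  proof (rule integral_dominated_convergence[where w=phi])
    show "AE t in lborel. (\<lambda>n. indicator {..X n} t *\<^sub>R phi t) \<longlonglongrightarrow> phi t"
    proof
      fix t
      from X have "eventually (\<lambda>n. t \<le> X n) sequentially"
        unfolding filterlim_at_top_ge[where c=t] by auto
      then show "(\<lambda>n. indicator {..X n} t *\<^sub>R phi t) \<longlonglongrightarrow> phi t"
        by (intro tendsto_eventually) (auto split: split_indicator elim!: eventually_mono)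
    qed
  qed (auto split: split_indicator)
  then show "(\<lambda>n. Phi (X n)) \<longlonglongrightarrow> 1"
    by (simp add: Phi_def set_lebesgue_integral_def)
qed

lemma Phi_tendsto_0_at_bot: "(Phi \<longlongrightarrow> 0) at_bot"
proof (rule tendsto_at_botI_sequentially)
  fix X :: "nat \<Rightarrow> real" assume X: "filterlim X at_bot sequentially"
  have "(\<lambda>n. integral\<^sup>L lborel (\<lambda>t. indicator {..X n} t *\<^sub>R phi t)) \<longlonglongrightarrow>
      integral\<^sup>L lborel (\<lambda>t. indicator {} t *\<^sub>R phi t)"
  proof (rule integral_dominated_convergence[where w=phi])
    show "AE t in lborel. (\<lambda>n. indicator {..X n} t *\<^sub>R phi t) \<longlonglongrightarrow> indicator {} t *\<^sub>R phi t"
    proof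
      fix t
      from X have "eventually (\<lambda>n. X n \<le> t - 1) sequentially"
        unfolding filterlim_at_bot_le[where c="t - 1"] by auto
      then show "(\<lambda>n. indicator {..X n} t *\<^sub>R phi t) \<longlonglongrightarrow> indicator {} t *\<^sub>R phi t"
        by (intro tendsto_eventually) (auto split: split_indicator elim!: eventually_mono)
    qed
  qed (auto split: split_indicator)
  then show "(\<lambda>n. Phi (X n)) \<longlonglongrightarrow> 0"
    by (simp add: Phi_def set_lebesgue_integral_def)
qed

lemma Phi_pos: "0 < Phi x"
proof -
  have "0 \<le> Phi (x - 1)"
  proof (rule tendsto_upperbound[OF Phi_tendsto_0_at_bot])
    show "\<forall>\<^sub>F y in at_bot. Phi y \<le> Phi (x - 1)"
      using eventually_le_at_bot[of "x - 1"] by eventually_elim (rule Phi_mono)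
  qed simp
  then show ?thesis using Phi_strict_mono[of "x - 1" x] by simp
qed

lemma Phi_less_1: "Phi x < 1"
proof -
  have "Phi (x + 1) \<le> 1"
  proof (rule tendsto_lowerbound[OF Phi_tendsto_1_at_top])
    show "\<forall>\<^sub>F y in at_top. Phi (x + 1) \<le> Phi y"
      using eventually_ge_at_top[of "x + 1"] by eventually_elim (rule Phi_mono)
  qed simp
  then show ?thesis using Phi_strict_mono[of x "x + 1"] by simp
qed

lemma Phi_surj:
  assumes "0 < p" "p < 1"
  obtains x where "Phi x = p"
proof -
  from order_tendstoD(2)[OF Phi_tendsto_0_at_bot assms(1)] obtain a where a: "Phi a < p"
    by (auto simp: eventually_at_bot_linorder)
  from order_tendstoD(1)[OF Phi_tendsto_1_at_top assms(2)] obtain b where b: "p < Phi b"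
    by (auto simp: eventually_at_top_linorder)
  have "a \<le> b" using a b Phi_mono[of b a] by (cases "a \<le> b") auto
  then show ?thesis using IVT[of Phi a p b] a b isCont_Phi that by force
qed

lemma Phi_inv_Phi: "Phi_inv (Phi x) = x"
  unfolding Phi_inv_def by (rule the_equality) (auto intro: Phi_inj)

lemma Phi_Phi_inv: "0 < p \<Longrightarrow> p < 1 \<Longrightarrow> Phi (Phi_inv p) = p"
  by (metis Phi_surj Phi_inv_Phi)

lemma Phi_inv_mono:
  assumes "0 < p" "p \<le> q" "q < 1"
  shows "Phi_inv p \<le> Phi_inv q"
  using Phi_strict_mono[of "Phi_inv q" "Phi_inv p"] Phi_Phi_inv[of p] Phi_Phi_inv[of q] assms
  by fastforce

lemma phi_minus[simp]: "phi (- x) = phi x"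
  by (simp add: std_normal_density_def)

lemma has_real_derivative_phi: "(phi has_real_derivative - x * phi x) (at x)"
  unfolding std_normal_density_def
  by (auto intro!: derivative_eq_intros simp: power2_eq_square field_simps)

lemma has_real_derivative_phi_comp[derivative_intros]:
  "(f has_real_derivative f') (at x within s) \<Longrightarrow>
    ((\<lambda>x. phi (f x)) has_real_derivative - f x * phi (f x) * f') (at x within s)"
  using DERIV_chain2[OF has_real_derivative_phi] by blast

lemma phi_diff: "phi (x - t) = phi x * exp (x * t - t\<^sup>2 / 2)"
proof -
  have "- (x - t)\<^sup>2 / 2 = - x\<^sup>2 / 2 + (x * t - t\<^sup>2 / 2)" by (simp add: power2_eq_square field_simps)
  then have "exp (- (x - t)\<^sup>2 / 2) = exp (- x\<^sup>2 / 2) * exp (x * t - t\<^sup>2 / 2)"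
    by (simp only: exp_add)
  then show ?thesis by (simp add: std_normal_density_def)
qed

lemma d2_eq_d1_minus: "d2 k y = d1 k y - y"
  unfolding d1_def d2_def by simp

lemma d1_mult: "y > 0 \<Longrightarrow> d1 k y * y = y\<^sup>2 / 2 - k"
  unfolding d1_def by (simp add: power2_eq_square field_simps)

lemma exp_mult_phi_d2: "y > 0 \<Longrightarrow> exp k * phi (d2 k y) = phi (d1 k y)"
  by (simp add: d2_eq_d1_minus phi_diff d1_mult exp_minus)

lemma Phi_diff_le_C_BS:
  assumes "y > 0"
  shows "Phi x - exp k * Phi (x - y) \<le> C_BS k y"
proof -
  define g where "g x = Phi x - exp k * Phi (x - y)" for x
  define g' where "g' z = phi z * (1 - exp (k + z * y - y\<^sup>2 / 2))" for z
  have g_deriv: "(g has_real_derivative g' z) (at z)" for z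
  proof -
    have "exp k * phi (z - y) = phi z * exp (k + z * y - y\<^sup>2 / 2)"
      by (simp add: phi_diff exp_add exp_diff)
    then show ?thesis unfolding g_def g'_def
      by (auto intro!: derivative_eq_intros simp: algebra_simps)
  qed
  have g'_eq: "g' z = phi z * (1 - exp ((z - d1 k y) * y))" for z
    unfolding g'_def using d1_mult[OF assms, of k] by (simp add: algebra_simps)
  have g'_nonneg: "0 \<le> g' z" if "z \<le> d1 k y" for z
    unfolding g'_eq using that assms by (simp add: mult_nonpos_nonneg)
  have g'_nonpos: "g' z \<le> 0" if "d1 k y \<le> z" for z
    unfolding g'_eq using that assms by (simp add: mult_nonneg_nonpos)
  have "g x \<le> g (d1 k y)"
  proof (cases "x \<le> d1 k y")
    case True
    then show ?thesis
      by (rule DERIV_nonneg_imp_nondecreasing) (use g_deriv g'_nonneg in auto)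
  next
    case False
    then show ?thesis
      by (intro DERIV_nonpos_imp_nonincreasing[of "d1 k y" x])
        (use g_deriv g'_nonpos in auto)
  qed
  also have "g (d1 k y) = C_BS k y"
    unfolding g_def C_BS_def by (simp add: d2_eq_d1_minus)
  finally show ?thesis unfolding g_def .
qed

lemma implied_vol_le_H:
  assumes "k \<ge> 0" "y > 0" "C_BS k y = c" "0 < c" "c < D" "D < 1"
  shows "y \<le> H k c D"
proof (rule ccontr)
  define p where "p = (D - c) / exp k"
  have "0 < p" unfolding p_def using assms by simp
  have "D - c < exp k" using assms one_le_exp_iff[of k] by linarith
  then have "p < 1" unfolding p_def by (simp add: divide_less_eq)
  assume "\<not> y \<le> H k c D"
  then have "Phi (Phi_inv D - y) < Phi (Phi_inv p)"
    unfolding H_def p_def by (intro Phi_strict_mono) simp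
  then have "exp k * Phi (Phi_inv D - y) < D - c"
    using \<open>0 < p\<close> \<open>p < 1\<close> by (simp add: Phi_Phi_inv p_def field_simps)
  then have "C_BS k y < Phi (Phi_inv D) - exp k * Phi (Phi_inv D - y)"
    using assms by (simp add: Phi_Phi_inv)
  then show False
    using Phi_diff_le_C_BS[OF assms(2)] by (simp add: not_le[symmetric])
qed

lemma Mills_ratio_bound: "w * phi w < Phi (- w) * (1 + w\<^sup>2)"
proof -
  define h where "h w = Phi (- w) - w * phi w / (1 + w\<^sup>2)" for w
  have pos: "0 < 1 + w\<^sup>2" for w :: real by (simp add: add_pos_nonneg)
  have h_deriv: "(h has_real_derivative - 2 * phi w / (1 + w\<^sup>2)\<^sup>2) (at w)" for w
  proof -
    have "(h has_real_derivative
        - phi w - ((phi w - w * w * phi w) * (1 + w\<^sup>2) - w * phi w * (2 * w)) / ((1 + w\<^sup>2) * (1 + w\<^sup>2))) (at w)"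
      unfolding h_def using pos[of w] by (auto intro!: derivative_eq_intros simp: algebra_simps)
    also have "- phi w - ((phi w - w * w * phi w) * (1 + w\<^sup>2) - w * phi w * (2 * w)) / ((1 + w\<^sup>2) * (1 + w\<^sup>2))
        = - 2 * phi w / (1 + w\<^sup>2)\<^sup>2"
      using pos[of w] by (simp add: divide_simps) (simp add: algebra_simps power2_eq_square)
    finally show ?thesis .
  qed
  have "((\<lambda>w. Phi (- w)) \<longlongrightarrow> 0) at_top"
    by (rule filterlim_compose[OF Phi_tendsto_0_at_bot filterlim_uminus_at_bot_at_top])
  moreover have "((\<lambda>w. w * phi w / (1 + w\<^sup>2)) \<longlongrightarrow> 0) at_top"
    unfolding std_normal_density_def by real_asymp
  ultimately have "(h \<longlongrightarrow> 0) at_top"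
    unfolding h_def using tendsto_diff by fastforce
  then have "0 < h w"
  proof (rule DERIV_neg_imp_decreasing_at_top[rotated])
    fix x
    have "0 < 2 * phi x / (1 + x\<^sup>2)\<^sup>2" using normal_density_pos[of 1 0 x] pos[of x] by simp
    then show "\<exists>d. (h has_real_derivative d) (at x) \<and> d < 0" using h_deriv[of x] by auto
  qed
  then show ?thesis unfolding h_def using pos[of w] by (simp add: field_simps)
qed

text \<open>Up to a constant factor, \<open>w \<Phi>(-w) exp(w\<^sup>2/2)\<close> is \<open>w\<close> times the Mills ratio \<open>\<Phi>(-w) / \<phi>(w)\<close>.\<close>

lemma Mills_product_mono:
  assumes "w1 \<le> w2"
  shows "w1 * Phi (- w1) * exp (w1\<^sup>2 / 2) \<le> w2 * Phi (- w2) * exp (w2\<^sup>2 / 2)"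
proof (rule DERIV_nonneg_imp_nondecreasing[OF assms])
  fix w
  have "((\<lambda>w. w * Phi (- w) * exp (w\<^sup>2 / 2)) has_real_derivative
      exp (w\<^sup>2 / 2) * (Phi (- w) * (1 + w\<^sup>2) - w * phi w)) (at w)"
    by (auto intro!: derivative_eq_intros simp: algebra_simps power2_eq_square)
  moreover have "0 \<le> exp (w\<^sup>2 / 2) * (Phi (- w) * (1 + w\<^sup>2) - w * phi w)"
    using Mills_ratio_bound[of w] by simp
  ultimately show "\<exists>d. ((\<lambda>w. w * Phi (- w) * exp (w\<^sup>2 / 2)) has_real_derivative d) (at w) \<and> 0 \<le> d"
    by blast
qed

lemma d2_Phi_d2_le_d1_Phi_d1:
  assumes "k \<ge> 0" "y > 0"
  shows "exp k * d2 k y * Phi (d2 k y) \<le> d1 k y * Phi (d1 k y)"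
proof (cases "d1 k y \<ge> 0")
  case True
  have "0 \<le> k / y" using assms by simp
  then have "d2 k y < 0" unfolding d2_def using assms by linarith
  then have "exp k * d2 k y * Phi (d2 k y) < 0"
    by (simp add: mult_pos_neg mult_neg_pos Phi_pos)
  moreover have "0 \<le> d1 k y * Phi (d1 k y)" using True Phi_pos[of "d1 k y"] by simp
  ultimately show ?thesis by linarith
next
  case False
  have sq: "(d2 k y)\<^sup>2 / 2 = (d1 k y)\<^sup>2 / 2 + k"
    unfolding d1_def d2_def using assms by (simp add: power2_eq_square field_simps)
  have "- d1 k y \<le> - d2 k y" using assms by (simp add: d2_eq_d1_minus)
  from Mills_product_mono[OF this]
  have "exp ((d1 k y)\<^sup>2 / 2) * (- d1 k y * Phi (d1 k y))
      \<le> exp ((d1 k y)\<^sup>2 / 2) * (- d2 k y * Phi (d2 k y) * exp k)"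
    by (simp add: sq exp_add mult_ac)
  then show ?thesis by (simp add: algebra_simps)
qed

lemma has_real_derivative_d1: "y \<noteq> 0 \<Longrightarrow> (d1 k has_real_derivative k / y\<^sup>2 + 1 / 2) (at y)"
  unfolding d1_def[abs_def] by (auto intro!: derivative_eq_intros simp: power2_eq_square)

lemma has_real_derivative_d2: "y \<noteq> 0 \<Longrightarrow> (d2 k has_real_derivative k / y\<^sup>2 - 1 / 2) (at y)"
  unfolding d2_def[abs_def] by (auto intro!: derivative_eq_intros simp: power2_eq_square)

lemma has_real_derivative_C_BS: "y > 0 \<Longrightarrow> (C_BS k has_real_derivative phi (d1 k y)) (at y)"
  unfolding C_BS_def[abs_def]
  by (rule derivative_eq_intros has_real_derivative_d1 has_real_derivative_d2 refl | simp)+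
    (simp add: exp_mult_phi_d2[symmetric] algebra_simps)

lemma C_D_mono:
  assumes "k \<ge> 0" "0 < y1" "y1 \<le> y2"
  shows "C_D k y1 \<le> C_D k y2"
proof (rule DERIV_nonneg_imp_nondecreasing[OF assms(3)])
  fix y assume "y1 \<le> y"
  then have "y > 0" using assms by simp
  let ?P = "Phi (d1 k y)"
  have "(C_D k has_real_derivative
      (phi (d1 k y) * ?P - C_BS k y * (phi (d1 k y) * (k / y\<^sup>2 + 1 / 2))) / (?P * ?P)) (at y)"
    unfolding C_D_def[abs_def] using \<open>y > 0\<close> Phi_pos[of "d1 k y"]
    by (intro DERIV_divide has_real_derivative_C_BS has_real_derivative_Phi_comp has_real_derivative_d1) auto
  moreover have "0 \<le> ?P - C_BS k y * (k / y\<^sup>2 + 1 / 2)"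
  proof -
    have "y * (?P - C_BS k y * (k / y\<^sup>2 + 1 / 2)) = d1 k y * ?P - exp k * d2 k y * Phi (d2 k y)"
      unfolding C_BS_def d1_def d2_def using \<open>y > 0\<close> by (simp add: field_simps power2_eq_square)
    also have "\<dots> \<ge> 0" using d2_Phi_d2_le_d1_Phi_d1[OF assms(1) \<open>y > 0\<close>] by simp
    finally show ?thesis using \<open>y > 0\<close> by (simp add: zero_le_mult_iff)
  qed
  then have "0 \<le> phi (d1 k y) * (?P - C_BS k y * (k / y\<^sup>2 + 1 / 2))" by simp
  then have "0 \<le> (phi (d1 k y) * ?P - C_BS k y * (phi (d1 k y) * (k / y\<^sup>2 + 1 / 2))) / (?P * ?P)"
    by (simp add: algebra_simps)
  ultimately show "\<exists>d. (C_D k has_real_derivative d) (at y) \<and> 0 \<le> d" by blast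
qed

lemma d1_inv_mono:
  assumes "k \<ge> 0" "x \<le> y"
  shows "d1_inv k x \<le> d1_inv k y"
proof -
  let ?s = "sqrt (y\<^sup>2 + 2 * k)"
  have s_ge: "\<bar>y\<bar> \<le> ?s" using assms by (simp add: real_le_rsqrt)
  have "x\<^sup>2 + 2 * k \<le> (y - x + ?s)\<^sup>2"
  proof -
    have "?s\<^sup>2 = y\<^sup>2 + 2 * k" using assms by simp
    moreover have "0 \<le> (y - x) * (2 * y + 2 * ?s)" using assms s_ge by simp
    ultimately show ?thesis by (simp add: power2_eq_square algebra_simps)
  qed
  then have "sqrt (x\<^sup>2 + 2 * k) \<le> sqrt ((y - x + ?s)\<^sup>2)" by (rule real_sqrt_le_mono)
  also have "\<dots> = y - x + ?s" using assms s_ge by simp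
  finally show ?thesis unfolding d1_inv_def by simp
qed

lemma d1_inv_d1:
  assumes "k \<ge> 0" "s > 0"
  shows "d1_inv k (d1 k s) = s"
proof -
  have "(d1 k s)\<^sup>2 + 2 * k = (k / s + s / 2)\<^sup>2"
    unfolding d1_def using assms by (simp add: power2_eq_square field_simps)
  moreover have "0 \<le> k / s + s / 2" using assms by simp
  ultimately show ?thesis unfolding d1_inv_def by (simp add: d1_def)
qed

lemma d1_inv_Phi_inv_price_delta_le:
  assumes "k \<ge> 0" "y > 0" "C_BS k y = c" "0 < c" "y \<le> u"
  shows "d1_inv k (Phi_inv (c / C_D k u)) \<le> y"
proof -
  have C_D_y: "C_D k y = c / Phi (d1 k y)" unfolding C_D_def using assms by simp
  then have "0 < C_D k y" using assms Phi_pos by simp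
  moreover have "C_D k y \<le> C_D k u" using C_D_mono assms by blast
  ultimately have "c / C_D k u \<le> Phi (d1 k y)"
    using frac_le[of c c "C_D k y" "C_D k u"] assms by (simp add: C_D_y Phi_pos)
  moreover have "0 < c / C_D k u" using \<open>0 < C_D k y\<close> \<open>C_D k y \<le> C_D k u\<close> assms by simp
  ultimately have "Phi_inv (c / C_D k u) \<le> d1 k y"
    using Phi_inv_mono[of "c / C_D k u" "Phi (d1 k y)"] Phi_less_1 by (simp add: Phi_inv_Phi)
  then show ?thesis using d1_inv_mono d1_inv_d1 assms by metis
qed

theorem corollary5p1:
  fixes k c \<sigma> :: real
  assumes "k \<ge> 0" and "0 < c" and "c < 1"
    and "\<sigma> > 0" and "C_BS k \<sigma> = c"
  shows "L_U23 k c \<le> \<sigma>"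
proof -
  define D where "D = min ((1 + c) / 2) (c + exp k * Phi (- sqrt (2 * k)))"
  have "c < D" unfolding D_def using assms Phi_pos by simp
  moreover have "D < 1" unfolding D_def using assms by (simp add: min_less_iff_disj)
  ultimately have "\<sigma> \<le> U23 k c"
    unfolding U23_def D_def[symmetric] using implied_vol_le_H assms by blast
  then show ?thesis
    unfolding L_U23_def using d1_inv_Phi_inv_price_delta_le assms by blast
qed

end
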